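(* Let $\mathcal{F}_1,\dots,\mathcal{F}_k$ be finite nonempty families of convex sets in $\mathbb{R}^d$ and let $b\in\mathbb{R}^d$. If for every transversal $\mathcal{T}$ of $\mathcal{F}_1,\dots,\mathcal{F}_k$ the set $K(\mathcal{T})$ intersects the closed Euclidean unit ball $B(b,1)$, then there exist $i\in[k]$ and a point $q\in\mathbb{R}^d$ such that $d(q,K)\le\frac1{\sqrt k}$ for all $K\in\mathcal{F}_i$.
   Context: A transversal of $\mathcal{F}_1,\dots,\mathcal{F}_k$ is $\mathcal{T}=(K_1,\dots,K_k)$ with $K_i\in\mathcal{F}_i$ for all $i$, and $K(\mathcal{T})=\bigcap_{i=1}^kK_i$. $B(b,1)$ is the closed Euclidean ball of centre $b$ and radius $1$; $d(q,K)$ is Euclidean distance from a point to a set. *)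

theory Defs
  imports "HOL-Analysis.Analysis"
begin

definition is_transversal :: "nat \<Rightarrow> (nat \<Rightarrow> 'a set set) \<Rightarrow> (nat \<Rightarrow> 'a set) \<Rightarrow> bool" where
  "is_transversal k F T \<longleftrightarrow> (\<forall>i\<in>{1..k}. T i \<in> F i)"

definition K_of :: "nat \<Rightarrow> (nat \<Rightarrow> 'a set) \<Rightarrow> 'a set" where
  "K_of k T = (\<Inter>i\<in>{1..k}. T i)"

end

theory Submission
  imports Defs
begin

text \<open>Suppose no family \<open>F i\<close> has a point within \<open>1/\<surd>k\<close> of all its members. Choose the sets
  greedily: having fixed \<open>T 1, \<dots>, T n\<close>, let \<open>p\<close> be the point of the closed convex set
  \<open>closure (T 1 \<inter> \<dots> \<inter> T n)\<close> nearest to \<open>b\<close> and pick \<open>T (n+1) \<in> F (n+1)\<close> at distance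
  more than \<open>1/\<surd>k\<close> from \<open>p\<close>. Since \<open>p\<close> is a metric projection, every point of the new
  intersection lies farther from \<open>b\<close> than \<open>p\<close> in the Pythagorean sense, so the squared
  distance from \<open>b\<close> to the intersection grows by more than \<open>1/k\<close> at each step. After \<open>k\<close>
  steps the resulting transversal misses \<open>B(b,1)\<close>.\<close>

lemma dist_closest_point_sq_add_le:
  fixes S :: "'a::euclidean_space set"
  assumes "convex S" "closed S" "z \<in> S"
  shows "(dist a (closest_point S a))\<^sup>2 + (dist (closest_point S a) z)\<^sup>2 \<le> (dist a z)\<^sup>2"
proof -
  define p where "p = closest_point S a"
  have obtuse: "inner (a - p) (z - p) \<le> 0"
    unfolding p_def using closest_point_dot[OF assms] .
  have "(dist a z)\<^sup>2 = (norm ((a - p) - (z - p)))\<^sup>2"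
    by (simp add: dist_norm)
  also have "\<dots> = (norm (a - p))\<^sup>2 + (norm (z - p))\<^sup>2 - 2 * inner (a - p) (z - p)"
    by (simp add: power2_norm_eq_inner inner_diff_left inner_diff_right inner_commute)
  finally show ?thesis
    using obtuse unfolding p_def[symmetric] by (simp add: dist_norm norm_minus_commute)
qed

lemma obtain_far_set_increasing_dist_sq:
  fixes S :: "'a::euclidean_space set"
  assumes "convex S" "\<forall>z\<in>S. c \<le> (dist b z)\<^sup>2" "0 \<le> r"
    and far: "\<forall>q. \<exists>K\<in>F. r < infdist q K"
  obtains K where "K \<in> F" "\<forall>z\<in>S \<inter> K. c + r\<^sup>2 < (dist b z)\<^sup>2"
proof -
  define p where "p = closest_point (closure S) b"
  obtain K where "K \<in> F" and K: "r < infdist p K"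
    using far by blast
  have "c + r\<^sup>2 < (dist b z)\<^sup>2" if z: "z \<in> S" "z \<in> K" for z
  proof -
    have "closure S \<subseteq> {x. c \<le> (dist b x)\<^sup>2}"
      using assms(2) by (intro closure_minimal closed_Collect_le continuous_intros) auto
    moreover have "p \<in> closure S"
      unfolding p_def using z(1) by (intro closest_point_in_set) auto
    ultimately have "c \<le> (dist b p)\<^sup>2"
      by blast
    moreover have "r < dist p z"
      using K infdist_le[OF z(2), of p] by linarith
    then have "r\<^sup>2 < (dist p z)\<^sup>2"
      using \<open>0 \<le> r\<close> by (intro power_strict_mono) auto
    moreover have "(dist b p)\<^sup>2 + (dist p z)\<^sup>2 \<le> (dist b z)\<^sup>2"
      unfolding p_def using assms(1) z(1) closure_subset
      by (intro dist_closest_point_sq_add_le) (auto intro: convex_closure)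
    ultimately show ?thesis
      by linarith
  qed
  then show thesis
    using that \<open>K \<in> F\<close> by blast
qed

lemma greedy_partial_transversal:
  fixes F :: "nat \<Rightarrow> ('a::euclidean_space) set set"
  assumes convex: "\<forall>i\<in>{1..k}. \<forall>K\<in>F i. convex K"
    and far: "\<forall>i\<in>{1..k}. \<forall>q. \<exists>K\<in>F i. r < infdist q K"
    and "0 \<le> r" "n < k"
  shows "\<exists>T. (\<forall>i\<in>{1..Suc n}. T i \<in> F i) \<and>
    (\<forall>z\<in>(\<Inter>i\<in>{1..Suc n}. T i). real (Suc n) * r\<^sup>2 < (dist b z)\<^sup>2)"
  using \<open>n < k\<close>
proof (induction n)
  case 0
  obtain K where "K \<in> F 1" "\<forall>z\<in>UNIV \<inter> K. 0 + r\<^sup>2 < (dist b z)\<^sup>2"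
    using obtain_far_set_increasing_dist_sq[of UNIV 0 b r "F 1"] far \<open>0 < k\<close> \<open>0 \<le> r\<close>
    by auto
  then show ?case
    by (intro exI[of _ "\<lambda>_. K"]) auto
next
  case (Suc n)
  then obtain T where T: "\<forall>i\<in>{1..Suc n}. T i \<in> F i"
    and T_far: "\<forall>z\<in>(\<Inter>i\<in>{1..Suc n}. T i). real (Suc n) * r\<^sup>2 < (dist b z)\<^sup>2"
    by auto
  have "convex (\<Inter>i\<in>{1..Suc n}. T i)"
    using T convex Suc.prems by (intro convex_INT) force
  moreover have "\<forall>z\<in>(\<Inter>i\<in>{1..Suc n}. T i). real (Suc n) * r\<^sup>2 \<le> (dist b z)\<^sup>2"
    using T_far by (auto simp: less_imp_le)
  moreover note \<open>0 \<le> r\<close>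
  moreover have "\<forall>q. \<exists>K\<in>F (Suc (Suc n)). r < infdist q K"
    using far Suc.prems by auto
  ultimately obtain K where K: "K \<in> F (Suc (Suc n))"
    and K_far: "\<forall>z\<in>(\<Inter>i\<in>{1..Suc n}. T i) \<inter> K. real (Suc n) * r\<^sup>2 + r\<^sup>2 < (dist b z)\<^sup>2"
    by (rule obtain_far_set_increasing_dist_sq)
  define T' where "T' = T(Suc (Suc n) := K)"
  have "\<forall>i\<in>{1..Suc (Suc n)}. T' i \<in> F i"
    using T K by (auto simp: T'_def le_Suc_eq)
  moreover have "(\<Inter>i\<in>{1..Suc (Suc n)}. T' i) = (\<Inter>i\<in>{1..Suc n}. T i) \<inter> K"
    unfolding T'_def by (auto simp: atLeastAtMostSuc_conv)
  moreover have "real (Suc (Suc n)) * r\<^sup>2 = real (Suc n) * r\<^sup>2 + r\<^sup>2"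
    by (simp add: algebra_simps)
  ultimately show ?case
    using K_far by metis
qed

theorem theorem4p2:
  fixes F :: "nat \<Rightarrow> ('a::euclidean_space) set set" and k :: nat and b :: 'a
  assumes "k \<ge> 1"
    and "\<forall>i\<in>{1..k}. finite (F i) \<and> F i \<noteq> {} \<and> (\<forall>K\<in>F i. convex K)"
    and "\<forall>T. is_transversal k F T \<longrightarrow> K_of k T \<inter> cball b 1 \<noteq> {}"
  shows "\<exists>i\<in>{1..k}. \<exists>q. \<forall>K\<in>F i. infdist q K \<le> 1 / sqrt (real k)"
proof (rule ccontr)
  assume "\<not> ?thesis"
  then have far: "\<forall>i\<in>{1..k}. \<forall>q. \<exists>K\<in>F i. 1 / sqrt (real k) < infdist q K"
    by (auto simp: not_le)
  have k: "Suc (k - 1) = k"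
    using assms(1) by simp
  obtain T where "\<forall>i\<in>{1..k}. T i \<in> F i"
    and T_far: "\<forall>z\<in>K_of k T. real k * (1 / sqrt (real k))\<^sup>2 < (dist b z)\<^sup>2"
    using greedy_partial_transversal[OF _ far, of "k - 1" b] assms(1,2)
    unfolding K_of_def k by auto
  then obtain z where "z \<in> K_of k T" "dist b z \<le> 1"
    using assms(3) unfolding is_transversal_def by fastforce
  moreover have "real k * (1 / sqrt (real k))\<^sup>2 = 1"
    using assms(1) by (simp add: power_divide)
  ultimately show False
    using T_far power_le_one[OF zero_le_dist, of b z 2] by fastforce
qed

end
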